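(* Consider a Pandora's box problem with sequential inspection with initial state $s_0$. For every policy $\pi$, we have $J^{\pi,K}(s_0)=J^{\pi}(s_0)$ if and only if $\pi$ satisfies the following three conditions (almost surely, for every box $i$): (1) $\pi$ selects any box $i$ that it F-opened without P-opening it first whenever $V_i>\sigma_i^F$; (2) $\pi$ F-opens any P-opened box $i$ whose revealed type satisfies $\sigma_i^{F\mid T_i}>\sigma_i^P$; (3) $\pi$ selects any box $i$ that it F-opened after P-opening it whenever $V_i>\min\{\sigma_i^P,\sigma_i^{F\mid T_i}\}$.
   Context: Pandora's box problem with sequential inspection: there are $N$ independent boxes. Box $i$ has a type $T_i$ taking values in a finite set $\Gamma_i$ and a nonnegative prize $V_i$, with a known joint distribution of $(V_i,T_i)$; boxes are independent. A closed box $i$ can be F-opened (fully opened) at cost $c_i^F$, revealing $V_i$, or P-opened at cost $c_i^P$, revealing only $T_i$; a partially opened box can later be F-opened at additional cost $c_i^F$. At most one F-opened box is selected; the decision maker may stop at any time. In the initial state $s_0$ all boxes are closed. Thresholds: $\sigma_i^F$ solves $\mathbb{E}[(V_i-\sigma)^+]=c_i^F$; $\sigma_i^{F\mid t}$ solves $\mathbb{E}[(V_i-\sigma)^+\mid T_i=t]=c_i^F$; $\sigma_i^P$ solves $\mathbb{E}\big[\max\{0,-c_i^F+\mathbb{E}[(V_i-\sigma)^+\mid T_i]\}\big]=c_i^P$. For a policy $\pi$ define indicators: $\mathbb{P}_i$ = box $i$ is P-opened; $\mathbb{F}_i$ = box $i$ is F-opened directly (without a prior P-opening); $\widetilde{\mathbb{F}}_i$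 = box $i$ is F-opened after being P-opened; $\mathbb{S}_i$ = box $i$ is selected after being F-opened directly; $\widetilde{\mathbb{S}}_i$ = box $i$ is selected after being P-opened and then F-opened. The expected profit is $J^{\pi}(s_0)=\mathbb{E}\big[\sum_{i}(\mathbb{S}_iV_i-\mathbb{F}_ic_i^F-\mathbb{P}_ic_i^P)+\sum_i(\widetilde{\mathbb{S}}_iV_i-\widetilde{\mathbb{F}}_ic_i^F)\big]$. Define the capped values $K_i=\min\{V_i,\sigma_i^F\}$ and $\widetilde{K}_i=\min\{V_i,\sigma_i^P,\sigma_i^{F\mid T_i}\}$, and the free-info value $J^{\pi,K}(s_0)=\mathbb{E}\big[\sum_{i}\big(\mathbb{S}_iK_i(1-\mathbb{P}_i)+\widetilde{\mathbb{S}}_i\widetilde{K}_i\mathbb{P}_i\big)\big]$. *)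

theory Defs
  imports "HOL-Probability.Probability"
begin

text \<open>Boxes are indexed by 0,...,N-1. A realisation assigns to every box i the pair
  (V_i, T_i) :: real \<times> 't. Actions of the decision maker:\<close>

datatype action = POpen nat | FOpen nat | Sel nat | Stop

datatype 't obs = ObsType 't | ObsVal real | NoObs

type_synonym 't hist = "(action \<times> 't obs) list"

text \<open>The policy is executed on a realisation; an action that is not admissible in the current
  state (opening a box outside the range, P-opening a box that is not closed, F-opening an
  already F-opened box, selecting a box that is not F-opened) is treated as stopping.
  Since every admissible opening makes progress, 2N+1 steps suffice.\<close>

fun run :: "nat \<Rightarrow> ('t hist \<Rightarrow> action) \<Rightarrow> (nat \<Rightarrow> real \<times> 't) \<Rightarrow> nat \<Rightarrow> 't hist \<Rightarrow> 't hist" where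
  "run N \<pi> \<omega> 0 h = h"
| "run N \<pi> \<omega> (Suc k) h =
    (case \<pi> h of
       POpen i \<Rightarrow> (if i < N \<and> POpen i \<notin> fst ` set h \<and> FOpen i \<notin> fst ` set h
                  then run N \<pi> \<omega> k (h @ [(POpen i, ObsType (snd (\<omega> i)))]) else h)
     | FOpen i \<Rightarrow> (if i < N \<and> FOpen i \<notin> fst ` set h
                  then run N \<pi> \<omega> k (h @ [(FOpen i, ObsVal (fst (\<omega> i)))]) else h)
     | Sel i \<Rightarrow> (if FOpen i \<in> fst ` set h then h @ [(Sel i, NoObs)] else h)
     | Stop \<Rightarrow> h)"

definition final_hist :: "nat \<Rightarrow> ('t hist \<Rightarrow> action) \<Rightarrow> (nat \<Rightarrow> real \<times> 't) \<Rightarrow> 't hist" where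
  "final_hist N \<pi> \<omega> = run N \<pi> \<omega> (2 * N + 1) []"

definition acts :: "nat \<Rightarrow> ('t hist \<Rightarrow> action) \<Rightarrow> (nat \<Rightarrow> real \<times> 't) \<Rightarrow> action list" where
  "acts N \<pi> \<omega> = map fst (final_hist N \<pi> \<omega>)"

definition PInd :: "nat \<Rightarrow> ('t hist \<Rightarrow> action) \<Rightarrow> (nat \<Rightarrow> real \<times> 't) \<Rightarrow> nat \<Rightarrow> bool" where
  "PInd N \<pi> \<omega> i \<longleftrightarrow> POpen i \<in> set (acts N \<pi> \<omega>)"

definition FInd :: "nat \<Rightarrow> ('t hist \<Rightarrow> action) \<Rightarrow> (nat \<Rightarrow> real \<times> 't) \<Rightarrow> nat \<Rightarrow> bool" where
  "FInd N \<pi> \<omega> i \<longleftrightarrow> FOpen i \<in> set (acts N \<pi> \<omega>) \<and> \<not> PInd N \<pi> \<omega> i"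

definition FtInd :: "nat \<Rightarrow> ('t hist \<Rightarrow> action) \<Rightarrow> (nat \<Rightarrow> real \<times> 't) \<Rightarrow> nat \<Rightarrow> bool" where
  "FtInd N \<pi> \<omega> i \<longleftrightarrow> FOpen i \<in> set (acts N \<pi> \<omega>) \<and> PInd N \<pi> \<omega> i"

definition SInd :: "nat \<Rightarrow> ('t hist \<Rightarrow> action) \<Rightarrow> (nat \<Rightarrow> real \<times> 't) \<Rightarrow> nat \<Rightarrow> bool" where
  "SInd N \<pi> \<omega> i \<longleftrightarrow> Sel i \<in> set (acts N \<pi> \<omega>) \<and> \<not> PInd N \<pi> \<omega> i"

definition StInd :: "nat \<Rightarrow> ('t hist \<Rightarrow> action) \<Rightarrow> (nat \<Rightarrow> real \<times> 't) \<Rightarrow> nat \<Rightarrow> bool" where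
  "StInd N \<pi> \<omega> i \<longleftrightarrow> Sel i \<in> set (acts N \<pi> \<omega>) \<and> PInd N \<pi> \<omega> i"

abbreviation boxes :: "nat \<Rightarrow> (nat \<Rightarrow> (real \<times> 't) measure) \<Rightarrow> (nat \<Rightarrow> real \<times> 't) measure" where
  "boxes N D \<equiv> PiM {..<N} D"

text \<open>Measurability (non-anticipativity is built into the execution): the sequence of actions
  taken is a random variable.\<close>

definition policy_measurable :: "nat \<Rightarrow> (nat \<Rightarrow> (real \<times> 't) measure) \<Rightarrow> ('t hist \<Rightarrow> action) \<Rightarrow> bool" where
  "policy_measurable N D \<pi> \<longleftrightarrow> (\<lambda>\<omega>. acts N \<pi> \<omega>) \<in> measurable (boxes N D) (count_space UNIV)"

text \<open>Elementary conditional expectation of (V - s)^+ given T = t (T finitely valued).\<close>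

definition condE :: "(real \<times> 't) measure \<Rightarrow> real \<Rightarrow> 't \<Rightarrow> real" where
  "condE M s t = (\<integral>x. max 0 (fst x - s) * indicator {x. snd x = t} x \<partial>M) / measure M {x. snd x = t}"

definition J :: "nat \<Rightarrow> (nat \<Rightarrow> (real \<times> 't) measure) \<Rightarrow> (nat \<Rightarrow> real) \<Rightarrow> (nat \<Rightarrow> real)
                  \<Rightarrow> ('t hist \<Rightarrow> action) \<Rightarrow> real" where
  "J N D cF cP \<pi> = (\<integral>\<omega>. (\<Sum>i<N.
        (of_bool (SInd N \<pi> \<omega> i) * fst (\<omega> i) - of_bool (FInd N \<pi> \<omega> i) * cF i
         - of_bool (PInd N \<pi> \<omega> i) * cP i)
      + (of_bool (StInd N \<pi> \<omega> i) * fst (\<omega> i) - of_bool (FtInd N \<pi> \<omega> i) * cF i)) \<partial>boxes N D)"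

definition JK :: "nat \<Rightarrow> (nat \<Rightarrow> (real \<times> 't) measure) \<Rightarrow> (nat \<Rightarrow> real) \<Rightarrow> (nat \<Rightarrow> real)
                  \<Rightarrow> (nat \<Rightarrow> 't \<Rightarrow> real) \<Rightarrow> ('t hist \<Rightarrow> action) \<Rightarrow> real" where
  "JK N D \<sigma>F \<sigma>P \<sigma>Ft \<pi> = (\<integral>\<omega>. (\<Sum>i<N.
        of_bool (SInd N \<pi> \<omega> i) * min (fst (\<omega> i)) (\<sigma>F i) * (1 - of_bool (PInd N \<pi> \<omega> i))
      + of_bool (StInd N \<pi> \<omega> i) * min (fst (\<omega> i)) (min (\<sigma>P i) (\<sigma>Ft i (snd (\<omega> i))))
          * of_bool (PInd N \<pi> \<omega> i)) \<partial>boxes N D)"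

definition cond1 :: "nat \<Rightarrow> (nat \<Rightarrow> (real \<times> 't) measure) \<Rightarrow> (nat \<Rightarrow> real) \<Rightarrow> ('t hist \<Rightarrow> action) \<Rightarrow> bool" where
  "cond1 N D \<sigma>F \<pi> \<longleftrightarrow> (AE \<omega> in boxes N D. \<forall>i<N.
      FInd N \<pi> \<omega> i \<and> fst (\<omega> i) > \<sigma>F i \<longrightarrow> Sel i \<in> set (acts N \<pi> \<omega>))"

definition cond2 :: "nat \<Rightarrow> (nat \<Rightarrow> (real \<times> 't) measure) \<Rightarrow> (nat \<Rightarrow> real) \<Rightarrow> (nat \<Rightarrow> 't \<Rightarrow> real)
                      \<Rightarrow> ('t hist \<Rightarrow> action) \<Rightarrow> bool" where
  "cond2 N D \<sigma>P \<sigma>Ft \<pi> \<longleftrightarrow> (AE \<omega> in boxes N D. \<forall>i<N.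
      PInd N \<pi> \<omega> i \<and> \<sigma>Ft i (snd (\<omega> i)) > \<sigma>P i \<longrightarrow> FOpen i \<in> set (acts N \<pi> \<omega>))"

definition cond3 :: "nat \<Rightarrow> (nat \<Rightarrow> (real \<times> 't) measure) \<Rightarrow> (nat \<Rightarrow> real) \<Rightarrow> (nat \<Rightarrow> 't \<Rightarrow> real)
                      \<Rightarrow> ('t hist \<Rightarrow> action) \<Rightarrow> bool" where
  "cond3 N D \<sigma>P \<sigma>Ft \<pi> \<longleftrightarrow> (AE \<omega> in boxes N D. \<forall>i<N.
      FtInd N \<pi> \<omega> i \<and> fst (\<omega> i) > min (\<sigma>P i) (\<sigma>Ft i (snd (\<omega> i))) \<longrightarrow> Sel i \<in> set (acts N \<pi> \<omega>))"

end

(*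
  Split every prize as V = min(V, s) + (V - s)^+ at the relevant index s. Whether box i is
  F-opened directly, or P-opened, is decided before anything about box i has been seen, and
  whether a P-opened box is F-opened depends on box i only through its type. The costs satisfy
  cF = E (V - sigmaF)^+, cP = E (E[(V - sigmaP)^+ | T] - cF)^+ and, given T = t,
  cF + (E[(V - sigmaP)^+ | T = t] - cF)^+ = E[(V - min(sigmaP, sigmaF|t))^+ | T = t],
  so by independence every cost paid equals in expectation the excess it buys. Hence
  J^pi = J^{pi,K} - E sum_i loss_i, where the pointwise nonnegative loss_i collects the excesses
  paid for and never collected: that of an F-opened box which is not selected, and the option
  value of a P-opened box which is not F-opened. The two values agree iff almost surely no loss
  occurs, which is the three conditions; for condition (2) note that, for a type of positive
  probability, E[(V - sigmaP)^+ | T] > cF iff sigmaP < sigmaF|T.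
*)

theory Submission
  imports Defs
begin

section \<open>Executions of a policy\<close>

lemma run_extends: "\<exists>s. run N \<pi> \<omega> k h = h @ s"
proof (induction k arbitrary: h)
  case (Suc k)
  show ?case
  proof (cases "\<pi> h")
    case (POpen j)
    then show ?thesis using Suc[of "h @ [(POpen j, ObsType (snd (\<omega> j)))]"] by auto
  next
    case (FOpen j)
    then show ?thesis using Suc[of "h @ [(FOpen j, ObsVal (fst (\<omega> j)))]"] by auto
  qed auto
qed simp

definition consistent_acts :: "action list \<Rightarrow> bool" where
  "consistent_acts as \<longleftrightarrow> (\<forall>i. Sel i \<in> set as \<longrightarrow> FOpen i \<in> set as)
     \<and> (\<forall>i p s. as = p @ FOpen i # s \<longrightarrow> POpen i \<notin> set s)"

lemma snoc_eq_append_Cons: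
  "xs @ [x] = p @ y # s \<longleftrightarrow> (s = [] \<and> x = y \<and> xs = p) \<or> (\<exists>s'. s = s' @ [x] \<and> xs = p @ y # s')"
  by (cases s rule: rev_cases) auto

lemma consistent_acts_snoc:
  assumes "consistent_acts as"
    and "\<And>i. x = POpen i \<Longrightarrow> FOpen i \<notin> set as"
    and "\<And>i. x = Sel i \<Longrightarrow> FOpen i \<in> set as"
  shows "consistent_acts (as @ [x])"
  using assms unfolding consistent_acts_def snoc_eq_append_Cons
  by (cases x) fastforce+

lemma consistent_acts_run:
  "consistent_acts (map fst h) \<Longrightarrow> consistent_acts (map fst (run N \<pi> \<omega> k h))"
proof (induction k arbitrary: h)
  case (Suc k)
  then show ?case
    by (cases "\<pi> h") (auto intro!: Suc.IH consistent_acts_snoc, force)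
qed simp

lemma acts_consistent: "consistent_acts (acts N \<pi> \<omega>)"
  unfolding acts_def final_hist_def
  by (rule consistent_acts_run) (simp add: consistent_acts_def)

lemma Sel_imp_FOpen: "Sel i \<in> set (acts N \<pi> \<omega>) \<Longrightarrow> FOpen i \<in> set (acts N \<pi> \<omega>)"
  using acts_consistent by (auto simp: consistent_acts_def)

lemma no_POpen_after_FOpen: "acts N \<pi> \<omega> = p @ FOpen i # s \<Longrightarrow> POpen i \<notin> set s"
  using acts_consistent[of N \<pi> \<omega>] unfolding consistent_acts_def by blast

(* The two runs can only separate at an action in B: no other action observes a difference. *)
lemma run_eq_or_diverge:
  assumes "\<And>j. POpen j \<notin> B \<Longrightarrow> snd (\<omega> j) = snd (\<omega>' j)"
    and "\<And>j. FOpen j \<notin> B \<Longrightarrow> fst (\<omega> j) = fst (\<omega>' j)"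
  shows "run N \<pi> \<omega> k h = run N \<pi> \<omega>' k h \<or> (\<exists>p a ob ob' k'. a \<in> B \<and>
     run N \<pi> \<omega> k h = run N \<pi> \<omega> k' (p @ [(a, ob)]) \<and> run N \<pi> \<omega>' k h = run N \<pi> \<omega>' k' (p @ [(a, ob')]))"
proof (induction k arbitrary: h)
  case (Suc k)
  show ?case
  proof (cases "\<pi> h")
    case (POpen j)
    show ?thesis
    proof (cases "POpen j \<in> B")
      case True
      then show ?thesis using POpen by fastforce
    next
      case False
      then show ?thesis using POpen assms(1) Suc.IH[of "h @ [(POpen j, ObsType (snd (\<omega> j)))]"] by auto
    qed
  next
    case (FOpen j)
    show ?thesis
    proof (cases "FOpen j \<in> B")
      case True
      then show ?thesis using FOpen by fastforce
    next
      case False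
      then show ?thesis using FOpen assms(2) Suc.IH[of "h @ [(FOpen j, ObsVal (fst (\<omega> j)))]"] by auto
    qed
  qed auto
qed simp

lemma acts_eq_or_diverge:
  assumes "\<And>j. POpen j \<notin> B \<Longrightarrow> snd (\<omega> j) = snd (\<omega>' j)"
    and "\<And>j. FOpen j \<notin> B \<Longrightarrow> fst (\<omega> j) = fst (\<omega>' j)"
  shows "acts N \<pi> \<omega> = acts N \<pi> \<omega>' \<or>
    (\<exists>p a s s'. a \<in> B \<and> acts N \<pi> \<omega> = p @ a # s \<and> acts N \<pi> \<omega>' = p @ a # s')"
  using run_eq_or_diverge[OF assms, where k = "2 * N + 1" and h = "[]"]
proof
  assume "run N \<pi> \<omega> (2 * N + 1) [] = run N \<pi> \<omega>' (2 * N + 1) []"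
  then show ?thesis by (simp add: acts_def final_hist_def)
next
  assume "\<exists>p a ob ob' k'. a \<in> B \<and>
     run N \<pi> \<omega> (2 * N + 1) [] = run N \<pi> \<omega> k' (p @ [(a, ob)]) \<and>
     run N \<pi> \<omega>' (2 * N + 1) [] = run N \<pi> \<omega>' k' (p @ [(a, ob')])"
  then obtain p a ob ob' k' where "a \<in> B"
    and "final_hist N \<pi> \<omega> = run N \<pi> \<omega> k' (p @ [(a, ob)])"
    and "final_hist N \<pi> \<omega>' = run N \<pi> \<omega>' k' (p @ [(a, ob')])"
    unfolding final_hist_def by blast
  moreover obtain s s' where "run N \<pi> \<omega> k' (p @ [(a, ob)]) = p @ (a, ob) # s"
    and "run N \<pi> \<omega>' k' (p @ [(a, ob')]) = p @ (a, ob') # s'"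
    using run_extends[of N \<pi> \<omega> k' "p @ [(a, ob)]"] run_extends[of N \<pi> \<omega>' k' "p @ [(a, ob')]"] by auto
  ultimately have "acts N \<pi> \<omega> = map fst p @ a # map fst s" "acts N \<pi> \<omega>' = map fst p @ a # map fst s'"
    by (simp_all add: acts_def)
  then show ?thesis using \<open>a \<in> B\<close> by blast
qed

lemma PInd_FInd_indep_own_box:
  assumes "\<And>j. j \<noteq> i \<Longrightarrow> \<omega> j = \<omega>' j"
  shows "PInd N \<pi> \<omega> i = PInd N \<pi> \<omega>' i \<and> FInd N \<pi> \<omega> i = FInd N \<pi> \<omega>' i"
proof -
  have "acts N \<pi> \<omega> = acts N \<pi> \<omega>' \<or> (\<exists>p a s s'. a \<in> {POpen i, FOpen i} \<and>
      acts N \<pi> \<omega> = p @ a # s \<and> acts N \<pi> \<omega>' = p @ a # s')"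
    by (rule acts_eq_or_diverge) (use assms in auto)
  then show ?thesis
    using no_POpen_after_FOpen[of N \<pi> \<omega> _ i] no_POpen_after_FOpen[of N \<pi> \<omega>' _ i]
    by (fastforce simp: PInd_def FInd_def)
qed

lemma FtInd_indep_own_prize:
  assumes "\<And>j. j \<noteq> i \<Longrightarrow> \<omega> j = \<omega>' j" and "snd (\<omega> i) = snd (\<omega>' i)"
  shows "FtInd N \<pi> \<omega> i = FtInd N \<pi> \<omega>' i"
proof -
  have "acts N \<pi> \<omega> = acts N \<pi> \<omega>' \<or> (\<exists>p a s s'. a \<in> {FOpen i} \<and>
      acts N \<pi> \<omega> = p @ a # s \<and> acts N \<pi> \<omega>' = p @ a # s')"
  proof (rule acts_eq_or_diverge)
    fix j
    show "snd (\<omega> j) = snd (\<omega>' j)" "FOpen j \<notin> {FOpen i} \<Longrightarrow> fst (\<omega> j) = fst (\<omega>' j)"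
      using assms by (cases "j = i"; simp)+
  qed
  then show ?thesis
    using no_POpen_after_FOpen[of N \<pi> \<omega> _ i] no_POpen_after_FOpen[of N \<pi> \<omega>' _ i]
    by (fastforce simp: FtInd_def PInd_def)
qed

section \<open>Laws of a prize with a finitely valued type\<close>

locale prize_type_law = prob_space M for M :: "(real \<times> 't) measure" +
  fixes \<Gamma> :: "'t set"
  assumes sets_eq: "sets M = sets (borel \<Otimes>\<^sub>M count_space UNIV)"
    and finite_types: "finite \<Gamma>"
    and AE_types: "AE y in M. snd y \<in> \<Gamma>"
    and integrable_prize: "integrable M fst"
begin

lemma space_eq: "space M = UNIV"
  using sets_eq_imp_space_eq[OF sets_eq] by (simp add: space_pair_measure)

lemma measurable_snd [measurable]: "snd \<in> M \<rightarrow>\<^sub>M count_space UNIV"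
  unfolding measurable_cong_sets[OF sets_eq refl] by measurable

lemma type_set_sets [measurable]: "{y. snd y = t} \<in> sets M"
  using measurable_sets[OF measurable_snd, of "{t}"] by (simp add: space_eq vimage_def)

lemma integrable_type_fun: "integrable M (\<lambda>y. \<phi> (snd y) :: real)"
proof (rule Bochner_Integration.integrable_bound)
  show "integrable M (\<lambda>_. \<Sum>t\<in>\<Gamma>. \<bar>\<phi> t\<bar>)" by simp
  show "AE y in M. norm (\<phi> (snd y)) \<le> norm (\<Sum>t\<in>\<Gamma>. \<bar>\<phi> t\<bar>)"
    using AE_types by eventually_elim (auto intro!: member_le_sum finite_types)
qed (rule measurable_compose[OF measurable_snd], simp)

lemma integrable_times_type_indicator:
  fixes g :: "real \<times> 't \<Rightarrow> real"
  shows "integrable M g \<Longrightarrow> integrable M (\<lambda>y. g y * indicator {y. snd y = t} y)"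
  by (rule integrable_real_mult_indicator) simp_all

lemma integral_split_types:
  fixes g :: "real \<times> 't \<Rightarrow> real"
  assumes "integrable M g"
  shows "(\<integral>y. g y \<partial>M) = (\<Sum>t\<in>\<Gamma>. \<integral>y. g y * indicator {y. snd y = t} y \<partial>M)"
proof -
  have "(\<integral>y. g y \<partial>M) = (\<integral>y. (\<Sum>t\<in>\<Gamma>. g y * indicator {y. snd y = t} y) \<partial>M)"
  proof (rule integral_cong_AE)
    show "AE y in M. g y = (\<Sum>t\<in>\<Gamma>. g y * indicator {y. snd y = t} y)"
      using AE_types
    proof eventually_elim
      case (elim y)
      have "(\<Sum>t\<in>\<Gamma>. g y * indicator {y. snd y = t} y) = (\<Sum>t\<in>\<Gamma>. if snd y = t then g y else 0)"
        by (intro sum.cong) (auto simp: indicator_def)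
      then show ?case using elim finite_types by simp
    qed
  qed (use assms in \<open>auto intro!: borel_measurable_integrable integrable_times_type_indicator\<close>)
  also have "\<dots> = (\<Sum>t\<in>\<Gamma>. \<integral>y. g y * indicator {y. snd y = t} y \<partial>M)"
    using assms integrable_times_type_indicator by (simp add: Bochner_Integration.integral_sum)
  finally show ?thesis .
qed

lemma AE_not_null_type:
  assumes "measure M {y. snd y = t} = 0"
  shows "AE y in M. snd y \<noteq> t"
proof -
  have "{y. snd y = t} \<in> null_sets M"
    using assms by (simp add: null_sets_def emeasure_eq_measure)
  from AE_not_in[OF this] show ?thesis by simp
qed

lemma integral_null_type:
  fixes g :: "real \<times> 't \<Rightarrow> real"
  assumes "measure M {y. snd y = t} = 0"
  shows "(\<integral>y. g y * indicator {y. snd y = t} y \<partial>M) = 0"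
  using AE_not_null_type[OF assms] by (intro integral_eq_zero_AE) auto

lemma AE_type_positive: "AE y in M. 0 < measure M {x. snd x = snd y}"
proof -
  have "AE y in M. \<forall>t\<in>\<Gamma>. measure M {x. snd x = t} = 0 \<longrightarrow> snd y \<noteq> t"
    using AE_not_null_type by (intro AE_finite_allI[OF finite_types]) (cases "measure M {x. snd x = t} = 0"; simp)
  with AE_types show ?thesis
    by eventually_elim (metis measure_nonneg order_le_less)
qed

lemma integrable_excess: "integrable M (\<lambda>y. max 0 (fst y - s))"
  using integrable_prize by (intro integrable_max integrable_diff) auto

lemma integral_excess_on_type:
  "(\<integral>y. max 0 (fst y - s) * indicator {y. snd y = t} y \<partial>M) = measure M {y. snd y = t} * condE M s t"
  by (cases "measure M {y. snd y = t} = 0") (simp_all add: integral_null_type condE_def)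

lemma condE_antimono:
  assumes "s1 \<le> s2"
  shows "condE M s2 t \<le> condE M s1 t"
  unfolding condE_def
proof (intro divide_right_mono integral_mono measure_nonneg)
  show "max 0 (fst y - s2) * indicator {y. snd y = t} y \<le> max 0 (fst y - s1) * indicator {y. snd y = t} y" for y
    using assms by (auto simp: indicator_def)
qed (auto intro: integrable_times_type_indicator integrable_excess)

lemma condE_min:
  assumes "condE M sf t = c"
  shows "condE M (min sp sf) t = c + max 0 (condE M sp t - c)"
  using condE_antimono[of sp sf t] condE_antimono[of sf sp t] assms by (auto simp: min_def)

text \<open>If the conditional excesses at sp < sf agreed, then V \<le> sp almost surely on the type, which
  would make the excess at sf vanish.\<close>
lemma condE_strict_antimono:
  assumes pos: "0 < measure M {y. snd y = t}" and sf_pos: "0 < condE M sf t" and lt: "sp < sf"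
  shows "condE M sf t < condE M sp t"
proof (rule ccontr)
  assume "\<not> condE M sf t < condE M sp t"
  then have eq: "condE M sp t = condE M sf t"
    using condE_antimono[of sp sf t] lt by simp
  define d where "d y = (max 0 (fst y - sp) - max 0 (fst y - sf)) * indicator {y. snd y = t} y" for y
  have int_d: "integrable M d"
    unfolding d_def left_diff_distrib
    by (intro Bochner_Integration.integrable_diff integrable_times_type_indicator integrable_excess)
  have "(\<integral>y. d y \<partial>M) = 0"
    using integral_excess_on_type[of sp t] integral_excess_on_type[of sf t] eq
      integrable_times_type_indicator[OF integrable_excess, of sp t]
      integrable_times_type_indicator[OF integrable_excess, of sf t]
    unfolding d_def left_diff_distrib by simp
  moreover have "AE y in M. 0 \<le> d y"
    using lt by (intro AE_I2) (auto simp: d_def indicator_def)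
  ultimately have "AE y in M. d y = 0"
    using integral_nonneg_eq_0_iff_AE[OF int_d] by blast
  then have "AE y in M. max 0 (fst y - sf) * indicator {y. snd y = t} y = 0"
    by eventually_elim (use lt in \<open>auto simp: d_def indicator_def split: if_splits\<close>)
  then have "measure M {y. snd y = t} * condE M sf t = 0"
    unfolding integral_excess_on_type[symmetric] by (rule integral_eq_zero_AE)
  with pos sf_pos show False by simp
qed

lemma condE_gt_iff:
  assumes "0 < measure M {y. snd y = t}" and "condE M sf t = c" and "0 < c"
  shows "c < condE M sp t \<longleftrightarrow> sp < sf"
  using assms condE_strict_antimono[OF assms(1)] condE_antimono[of sf sp t] by (cases "sp < sf") auto

lemma integral_excess_min_on_type:
  assumes "0 < measure M {y. snd y = t} \<Longrightarrow> condE M sf t = c"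
  shows "(\<integral>y. max 0 (fst y - min sp sf) * indicator {y. snd y = t} y \<partial>M)
    = (\<integral>y. (c + max 0 (condE M sp (snd y) - c)) * indicator {y. snd y = t} y \<partial>M)"
proof -
  have "(\<integral>y. (c + max 0 (condE M sp (snd y) - c)) * indicator {y. snd y = t} y \<partial>M)
      = (\<integral>y. (c + max 0 (condE M sp t - c)) * indicator {y. snd y = t} y \<partial>M)"
    by (rule Bochner_Integration.integral_cong) (auto simp: indicator_def)
  also have "\<dots> = (c + max 0 (condE M sp t - c)) * measure M {y. snd y = t}"
    by (simp add: space_eq)
  finally show ?thesis
    using assms condE_min[of sf t c sp] measure_nonneg[of M "{y. snd y = t}"]
    by (cases "measure M {y. snd y = t} = 0") (auto simp: integral_excess_on_type integral_null_type)
qed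

end

section \<open>Independence of the boxes\<close>

lemma integral_PiM_eq_if_sections_eq:
  fixes f g :: "('i \<Rightarrow> 'a) \<Rightarrow> real"
  assumes prob: "\<And>j. j \<in> I \<Longrightarrow> prob_space (M j)" and fin: "finite I" and i: "i \<in> I"
    and f: "integrable (PiM I M) f" and g: "integrable (PiM I M) g"
    and sections: "\<And>x. x \<in> space (PiM (I - {i}) M) \<Longrightarrow>
      (\<integral>y. f (x(i := y)) \<partial>M i) = (\<integral>y. g (x(i := y)) \<partial>M i)"
  shows "(\<integral>\<omega>. f \<omega> \<partial>PiM I M) = (\<integral>\<omega>. g \<omega> \<partial>PiM I M)"
proof -
  \<comment> \<open>Fubini on PiM needs a sigma-finite factor at every index, also outside I.\<close>
  define M' where "M' j = (if j \<in> I then M j else return (count_space UNIV) undefined)" for j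
  have "prob_space (M' j)" for j
    using prob by (auto simp: M'_def intro: prob_space_return)
  then interpret product_sigma_finite M'
    unfolding product_sigma_finite_def using prob_space_imp_sigma_finite by blast
  have PiM_I: "PiM I M = PiM I M'" and PiM_rest: "PiM (I - {i}) M = PiM (I - {i}) M'"
    by (auto intro!: PiM_cong simp: M'_def)
  have "(\<integral>\<omega>. f \<omega> \<partial>PiM I M) = (\<integral>x. (\<integral>y. f (x(i := y)) \<partial>M' i) \<partial>PiM (I - {i}) M')"
    using product_integral_insert[of "I - {i}" i f] fin f i by (simp add: PiM_I insert_absorb)
  also have "\<dots> = (\<integral>x. (\<integral>y. g (x(i := y)) \<partial>M' i) \<partial>PiM (I - {i}) M')"
    by (rule Bochner_Integration.integral_cong[OF refl]) (use sections i in \<open>simp add: M'_def PiM_rest\<close>)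
  also have "\<dots> = (\<integral>\<omega>. g \<omega> \<partial>PiM I M)"
    using product_integral_insert[of "I - {i}" i g] fin g i by (simp add: PiM_I insert_absorb)
  finally show ?thesis .
qed

lemma integrable_PiM_component:
  fixes \<phi> :: "'a \<Rightarrow> real"
  assumes prob: "\<And>j. j \<in> I \<Longrightarrow> prob_space (M j)" and i: "i \<in> I" and \<phi>: "integrable (M i) \<phi>"
  shows "integrable (PiM I M) (\<lambda>\<omega>. \<phi> (\<omega> i))"
proof -
  have "distr (PiM I M) (M i) (\<lambda>\<omega>. \<omega> i) = M i"
    using prob i by (intro distr_PiM_component) auto
  with \<phi> show ?thesis
    using integrable_distr_eq[of "\<lambda>\<omega>. \<omega> i" "PiM I M" "M i" \<phi>] i by simp
qed

lemma AE_PiM_component: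
  assumes "\<And>j. j \<in> I \<Longrightarrow> prob_space (M j)" and i: "i \<in> I" and "AE y in M i. P y"
  shows "AE \<omega> in PiM I M. P (\<omega> i)"
proof -
  have "distr (PiM I M) (M i) (\<lambda>\<omega>. \<omega> i) = M i"
    using assms by (intro distr_PiM_component) auto
  with assms show ?thesis
    using AE_distrD[OF measurable_component_singleton[OF i]] by metis
qed

lemma integrable_pred_times:
  fixes f :: "'a \<Rightarrow> real"
  assumes "integrable M f" and [measurable]: "Measurable.pred M R"
  shows "integrable M (\<lambda>\<omega>. of_bool (R \<omega>) * f \<omega>)"
proof (rule Bochner_Integration.integrable_bound[OF assms(1)])
  show "(\<lambda>\<omega>. of_bool (R \<omega>) * f \<omega>) \<in> borel_measurable M"
    using borel_measurable_integrable[OF assms(1)] by measurable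
qed simp

lemma integral_pred_times_component_eq:
  fixes f g :: "'a \<Rightarrow> real"
  assumes prob: "\<And>j. j \<in> I \<Longrightarrow> prob_space (M j)" and fin: "finite I" and i: "i \<in> I"
    and [measurable]: "Measurable.pred (PiM I M) R"
    and R_indep: "\<And>x y. R (x(i := y)) = R (x(i := c))"
    and f: "integrable (M i) f" and g: "integrable (M i) g"
    and eq: "(\<integral>y. f y \<partial>M i) = (\<integral>y. g y \<partial>M i)"
  shows "(\<integral>\<omega>. of_bool (R \<omega>) * f (\<omega> i) \<partial>PiM I M) = (\<integral>\<omega>. of_bool (R \<omega>) * g (\<omega> i) \<partial>PiM I M)"
proof (rule integral_PiM_eq_if_sections_eq[OF prob fin i])
  show "integrable (PiM I M) (\<lambda>\<omega>. of_bool (R \<omega>) * f (\<omega> i))"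
    "integrable (PiM I M) (\<lambda>\<omega>. of_bool (R \<omega>) * g (\<omega> i))"
    by (intro integrable_pred_times integrable_PiM_component[OF prob i] f g; simp)+
  fix x
  define k where "k = R (x(i := c))"
  have "R (x(i := y)) = k" for y
    unfolding k_def by (rule R_indep)
  then show "(\<integral>y. of_bool (R (x(i := y))) * f ((x(i := y)) i) \<partial>M i)
      = (\<integral>y. of_bool (R (x(i := y))) * g ((x(i := y)) i) \<partial>M i)"
    using eq by simp
qed

lemma integral_pred_times_component_eq_by_type:
  fixes f g :: "real \<times> 't \<Rightarrow> real"
  assumes prob: "\<And>j. j \<in> I \<Longrightarrow> prob_space (M j)" and fin: "finite I" and i: "i \<in> I"
    and law: "prize_type_law (M i) \<Gamma>"
    and [measurable]: "Measurable.pred (PiM I M) R"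
    and R_type: "\<And>x y. R (x(i := y)) = R (x(i := (c, snd y)))"
    and f: "integrable (M i) f" and g: "integrable (M i) g"
    and eq: "\<And>t. t \<in> \<Gamma> \<Longrightarrow> (\<integral>y. f y * indicator {y. snd y = t} y \<partial>M i)
      = (\<integral>y. g y * indicator {y. snd y = t} y \<partial>M i)"
  shows "(\<integral>\<omega>. of_bool (R \<omega>) * f (\<omega> i) \<partial>PiM I M) = (\<integral>\<omega>. of_bool (R \<omega>) * g (\<omega> i) \<partial>PiM I M)"
proof (rule integral_PiM_eq_if_sections_eq[OF prob fin i])
  interpret prize_type_law "M i" \<Gamma> by (fact law)
  show "integrable (PiM I M) (\<lambda>\<omega>. of_bool (R \<omega>) * f (\<omega> i))"
    "integrable (PiM I M) (\<lambda>\<omega>. of_bool (R \<omega>) * g (\<omega> i))"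
    by (intro integrable_pred_times integrable_PiM_component[OF prob i] f g; simp)+
  fix x
  define k where "k t = R (x(i := (c, t)))" for t
  have R_section: "R (x(i := y)) = k (snd y)" for y
    unfolding k_def by (rule R_type)
  have section_sum: "(\<integral>y. of_bool (R (x(i := y))) * \<phi> ((x(i := y)) i) \<partial>M i)
      = (\<Sum>t\<in>\<Gamma>. of_bool (k t) * (\<integral>y. \<phi> y * indicator {y. snd y = t} y \<partial>M i))"
    if "integrable (M i) \<phi>" for \<phi> :: "real \<times> 't \<Rightarrow> real"
  proof -
    have "integrable (M i) (\<lambda>y. of_bool (k (snd y)) * \<phi> y)"
      by (rule integrable_pred_times[OF that], rule measurable_compose[OF measurable_snd]) simp
    then have "(\<integral>y. of_bool (k (snd y)) * \<phi> y \<partial>M i)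
        = (\<Sum>t\<in>\<Gamma>. \<integral>y. of_bool (k (snd y)) * \<phi> y * indicator {y. snd y = t} y \<partial>M i)"
      by (rule integral_split_types)
    also have "\<dots> = (\<Sum>t\<in>\<Gamma>. \<integral>y. of_bool (k t) * (\<phi> y * indicator {y. snd y = t} y) \<partial>M i)"
      by (intro sum.cong refl Bochner_Integration.integral_cong) (auto simp: indicator_def)
    finally show ?thesis by (simp add: R_section)
  qed
  show "(\<integral>y. of_bool (R (x(i := y))) * f ((x(i := y)) i) \<partial>M i)
      = (\<integral>y. of_bool (R (x(i := y))) * g ((x(i := y)) i) \<partial>M i)"
    unfolding section_sum[OF f] section_sum[OF g] using eq by simp
qed

section \<open>Amortized profit of a policy\<close>

locale pandora_policy =
  fixes N :: nat and D :: "nat \<Rightarrow> (real \<times> 't) measure" and \<Gamma> :: "nat \<Rightarrow> 't set"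
    and cF cP \<sigma>F \<sigma>P :: "nat \<Rightarrow> real" and \<sigma>Ft :: "nat \<Rightarrow> 't \<Rightarrow> real"
    and \<pi> :: "'t hist \<Rightarrow> action"
  assumes box_law: "i < N \<Longrightarrow> prize_type_law (D i) (\<Gamma> i)"
    and cF_pos: "i < N \<Longrightarrow> 0 < cF i"
    and sigmaF: "i < N \<Longrightarrow> (\<integral>y. max 0 (fst y - \<sigma>F i) \<partial>D i) = cF i"
    and sigmaFt: "i < N \<Longrightarrow> t \<in> \<Gamma> i \<Longrightarrow> 0 < measure (D i) {y. snd y = t} \<Longrightarrow>
      condE (D i) (\<sigma>Ft i t) t = cF i"
    and sigmaP: "i < N \<Longrightarrow> (\<integral>y. max 0 (- cF i + condE (D i) (\<sigma>P i) (snd y)) \<partial>D i) = cP i"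
    and policy_meas: "policy_measurable N D \<pi>"
begin

lemma prob_box: "j \<in> {..<N} \<Longrightarrow> prob_space (D j)"
  using box_law prize_type_law.axioms(1) by blast

lemma pred_acts [measurable]: "Measurable.pred (boxes N D) (\<lambda>\<omega>. Q (acts N \<pi> \<omega>))"
  using policy_meas unfolding policy_measurable_def by (rule measurable_compose) simp

lemma pred_indicators [measurable]:
  "Measurable.pred (boxes N D) (\<lambda>\<omega>. PInd N \<pi> \<omega> i)"
  "Measurable.pred (boxes N D) (\<lambda>\<omega>. FInd N \<pi> \<omega> i)"
  "Measurable.pred (boxes N D) (\<lambda>\<omega>. FtInd N \<pi> \<omega> i)"
  "Measurable.pred (boxes N D) (\<lambda>\<omega>. SInd N \<pi> \<omega> i)"
  "Measurable.pred (boxes N D) (\<lambda>\<omega>. StInd N \<pi> \<omega> i)"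
  using pred_acts[of "\<lambda>as. POpen i \<in> set as"]
    pred_acts[of "\<lambda>as. FOpen i \<in> set as \<and> POpen i \<notin> set as"]
    pred_acts[of "\<lambda>as. FOpen i \<in> set as \<and> POpen i \<in> set as"]
    pred_acts[of "\<lambda>as. Sel i \<in> set as \<and> POpen i \<notin> set as"]
    pred_acts[of "\<lambda>as. Sel i \<in> set as \<and> POpen i \<in> set as"]
  by (simp_all add: PInd_def FInd_def FtInd_def SInd_def StInd_def)

lemma integrable_pred_times_box:
  fixes \<phi> :: "real \<times> 't \<Rightarrow> real"
  assumes "i < N" and "integrable (D i) \<phi>" and "Measurable.pred (boxes N D) R"
  shows "integrable (boxes N D) (\<lambda>\<omega>. of_bool (R \<omega>) * \<phi> (\<omega> i))"
proof (rule integrable_pred_times)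
  show "integrable (boxes N D) (\<lambda>\<omega>. \<phi> (\<omega> i))"
    by (rule integrable_PiM_component) (use assms prob_box in auto)
qed (fact assms)

definition excess_F :: "nat \<Rightarrow> real \<times> 't \<Rightarrow> real" where
  "excess_F i y = max 0 (fst y - \<sigma>F i)"

definition excess_PF :: "nat \<Rightarrow> real \<times> 't \<Rightarrow> real" where
  "excess_PF i y = max 0 (fst y - min (\<sigma>P i) (\<sigma>Ft i (snd y)))"

definition excess_P :: "nat \<Rightarrow> real \<times> 't \<Rightarrow> real" where
  "excess_P i y = max 0 (condE (D i) (\<sigma>P i) (snd y) - cF i)"

lemma integrable_box_functions:
  assumes "i < N"
  shows "integrable (D i) (excess_F i)" (is ?F) and "integrable (D i) (excess_PF i)" (is ?PF)
    and "integrable (D i) (excess_P i)" (is ?P)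
    and "integrable (D i) (\<lambda>y. min (fst y) (\<sigma>F i))" (is ?K)
    and "integrable (D i) (\<lambda>y. min (fst y) (min (\<sigma>P i) (\<sigma>Ft i (snd y))))" (is ?Kt)
    and "integrable (D i) (\<lambda>_. c)" (is ?c)
proof -
  interpret prize_type_law "D i" "\<Gamma> i" using box_law[OF assms] .
  show ?F ?PF ?P ?K ?Kt ?c
    unfolding excess_F_def[abs_def] excess_PF_def[abs_def] excess_P_def[abs_def]
    using integrable_prize integrable_type_fun
    by (intro integrable_max integrable_min Bochner_Integration.integrable_diff integrable_const; simp)+
qed

lemma FInd_PInd_fun_upd:
  "FInd N \<pi> (x(i := y)) i = FInd N \<pi> (x(i := c)) i"
  "PInd N \<pi> (x(i := y)) i = PInd N \<pi> (x(i := c)) i"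
  using PInd_FInd_indep_own_box[of i "x(i := y)" "x(i := c)" N \<pi>] by auto

lemma FtInd_fun_upd: "FtInd N \<pi> (x(i := y)) i = FtInd N \<pi> (x(i := (c, snd y))) i"
  by (rule FtInd_indep_own_prize) auto

lemma integral_F_term_eq_0:
  assumes i: "i < N"
  shows "(\<integral>\<omega>. of_bool (FInd N \<pi> \<omega> i) * (excess_F i (\<omega> i) - cF i) \<partial>boxes N D) = 0"
proof -
  interpret prize_type_law "D i" "\<Gamma> i" using box_law[OF i] .
  have "(\<integral>\<omega>. of_bool (FInd N \<pi> \<omega> i) * (excess_F i (\<omega> i) - cF i) \<partial>boxes N D)
      = (\<integral>\<omega>. of_bool (FInd N \<pi> \<omega> i) * 0 \<partial>boxes N D)"
  proof (rule integral_pred_times_component_eq[where f = "\<lambda>y. excess_F i y - cF i" and g = "\<lambda>_. 0"])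
    show "(\<integral>y. excess_F i y - cF i \<partial>D i) = (\<integral>y. 0 \<partial>D i)"
      using sigmaF[OF i] integrable_box_functions(1)[OF i] by (simp add: excess_F_def[abs_def] prob_space)
  qed (use i prob_box integrable_box_functions(1)[OF i] FInd_PInd_fun_upd in auto)
  then show ?thesis by simp
qed

lemma integral_P_term_eq_0:
  assumes i: "i < N"
  shows "(\<integral>\<omega>. of_bool (PInd N \<pi> \<omega> i) * (excess_P i (\<omega> i) - cP i) \<partial>boxes N D) = 0"
proof -
  interpret prize_type_law "D i" "\<Gamma> i" using box_law[OF i] .
  have "(\<integral>\<omega>. of_bool (PInd N \<pi> \<omega> i) * (excess_P i (\<omega> i) - cP i) \<partial>boxes N D)
      = (\<integral>\<omega>. of_bool (PInd N \<pi> \<omega> i) * 0 \<partial>boxes N D)"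
  proof (rule integral_pred_times_component_eq[where f = "\<lambda>y. excess_P i y - cP i" and g = "\<lambda>_. 0"])
    show "(\<integral>y. excess_P i y - cP i \<partial>D i) = (\<integral>y. 0 \<partial>D i)"
      using sigmaP[OF i] integrable_box_functions(3)[OF i] by (simp add: excess_P_def[abs_def] prob_space)
  qed (use i prob_box integrable_box_functions(3)[OF i] FInd_PInd_fun_upd in auto)
  then show ?thesis by simp
qed

lemma integral_FP_term_eq_0:
  assumes i: "i < N"
  shows "(\<integral>\<omega>. of_bool (FtInd N \<pi> \<omega> i) * (excess_PF i (\<omega> i) - (cF i + excess_P i (\<omega> i))) \<partial>boxes N D) = 0"
proof -
  interpret prize_type_law "D i" "\<Gamma> i" using box_law[OF i] .
  have per_type: "(\<integral>y. (excess_PF i y - (cF i + excess_P i y)) * indicator {y. snd y = t} y \<partial>D i)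
      = (\<integral>y. 0 * indicator {y. snd y = t} y \<partial>D i)" if t: "t \<in> \<Gamma> i" for t
  proof -
    have "(\<integral>y. excess_PF i y * indicator {y. snd y = t} y \<partial>D i)
        = (\<integral>y. max 0 (fst y - min (\<sigma>P i) (\<sigma>Ft i t)) * indicator {y. snd y = t} y \<partial>D i)"
      by (rule Bochner_Integration.integral_cong) (auto simp: excess_PF_def indicator_def)
    also have "\<dots> = (\<integral>y. (cF i + excess_P i y) * indicator {y. snd y = t} y \<partial>D i)"
      using integral_excess_min_on_type[OF sigmaFt[OF i t]] by (simp add: excess_P_def)
    finally show ?thesis
      using integrable_box_functions[OF i]
      by (simp add: left_diff_distrib integrable_times_type_indicator)
  qed
  have "(\<integral>\<omega>. of_bool (FtInd N \<pi> \<omega> i) * (excess_PF i (\<omega> i) - (cF i + excess_P i (\<omega> i))) \<partial>boxes N D)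
      = (\<integral>\<omega>. of_bool (FtInd N \<pi> \<omega> i) * 0 \<partial>boxes N D)"
    by (rule integral_pred_times_component_eq_by_type[where f = "\<lambda>y. excess_PF i y - (cF i + excess_P i y)"
          and g = "\<lambda>_. 0" and \<Gamma> = "\<Gamma> i"])
      (use i prob_box box_law integrable_box_functions[OF i] per_type FtInd_fun_upd in auto)
  then show ?thesis by simp
qed

definition net_excess :: "(nat \<Rightarrow> real \<times> 't) \<Rightarrow> nat \<Rightarrow> real" where
  "net_excess \<omega> i = of_bool (FInd N \<pi> \<omega> i) * (excess_F i (\<omega> i) - cF i)
     + of_bool (FtInd N \<pi> \<omega> i) * (excess_PF i (\<omega> i) - (cF i + excess_P i (\<omega> i)))
     + of_bool (PInd N \<pi> \<omega> i) * (excess_P i (\<omega> i) - cP i)"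

definition loss :: "(nat \<Rightarrow> real \<times> 't) \<Rightarrow> nat \<Rightarrow> real" where
  "loss \<omega> i = (of_bool (FInd N \<pi> \<omega> i) - of_bool (SInd N \<pi> \<omega> i)) * excess_F i (\<omega> i)
     + (of_bool (FtInd N \<pi> \<omega> i) - of_bool (StInd N \<pi> \<omega> i)) * excess_PF i (\<omega> i)
     + (of_bool (PInd N \<pi> \<omega> i) - of_bool (FtInd N \<pi> \<omega> i)) * excess_P i (\<omega> i)"

definition profit :: "(nat \<Rightarrow> real \<times> 't) \<Rightarrow> nat \<Rightarrow> real" where
  "profit \<omega> i = (of_bool (SInd N \<pi> \<omega> i) * fst (\<omega> i) - of_bool (FInd N \<pi> \<omega> i) * cF i
       - of_bool (PInd N \<pi> \<omega> i) * cP i)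
     + (of_bool (StInd N \<pi> \<omega> i) * fst (\<omega> i) - of_bool (FtInd N \<pi> \<omega> i) * cF i)"

definition free_info :: "(nat \<Rightarrow> real \<times> 't) \<Rightarrow> nat \<Rightarrow> real" where
  "free_info \<omega> i = of_bool (SInd N \<pi> \<omega> i) * min (fst (\<omega> i)) (\<sigma>F i) * (1 - of_bool (PInd N \<pi> \<omega> i))
     + of_bool (StInd N \<pi> \<omega> i) * min (fst (\<omega> i)) (min (\<sigma>P i) (\<sigma>Ft i (snd (\<omega> i))))
         * of_bool (PInd N \<pi> \<omega> i)"

lemma free_info_eq:
  "free_info \<omega> i = of_bool (SInd N \<pi> \<omega> i) * min (fst (\<omega> i)) (\<sigma>F i)
     + of_bool (StInd N \<pi> \<omega> i) * min (fst (\<omega> i)) (min (\<sigma>P i) (\<sigma>Ft i (snd (\<omega> i))))"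
  by (auto simp: free_info_def SInd_def StInd_def)

lemma profit_decomposition: "profit \<omega> i = free_info \<omega> i + net_excess \<omega> i - loss \<omega> i"
proof -
  have "min v c + max 0 (v - c) = v" for v c :: real by auto
  then have "fst (\<omega> i) = min (fst (\<omega> i)) (\<sigma>F i) + excess_F i (\<omega> i)"
    "fst (\<omega> i) = min (fst (\<omega> i)) (min (\<sigma>P i) (\<sigma>Ft i (snd (\<omega> i)))) + excess_PF i (\<omega> i)"
    unfolding excess_F_def excess_PF_def by metis+
  then show ?thesis
    unfolding profit_def free_info_eq net_excess_def loss_def by (simp add: algebra_simps)
qed

lemma integrable_free_info: "i < N \<Longrightarrow> integrable (boxes N D) (\<lambda>\<omega>. free_info \<omega> i)"
  unfolding free_info_eq
  by (intro Bochner_Integration.integrable_add integrable_pred_times_box integrable_box_functions) simp_all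

lemma integrable_net_excess: "i < N \<Longrightarrow> integrable (boxes N D) (\<lambda>\<omega>. net_excess \<omega> i)"
  unfolding net_excess_def
  by (intro Bochner_Integration.integrable_add integrable_pred_times_box Bochner_Integration.integrable_diff
      integrable_box_functions integrable_const) simp_all

lemma integrable_loss: "i < N \<Longrightarrow> integrable (boxes N D) (\<lambda>\<omega>. loss \<omega> i)"
  unfolding loss_def left_diff_distrib
  by (intro Bochner_Integration.integrable_add Bochner_Integration.integrable_diff
      integrable_pred_times_box integrable_box_functions) simp_all

lemma integral_net_excess:
  assumes i: "i < N"
  shows "(\<integral>\<omega>. net_excess \<omega> i \<partial>boxes N D) = 0"
proof -
  have F: "integrable (boxes N D) (\<lambda>\<omega>. of_bool (FInd N \<pi> \<omega> i) * (excess_F i (\<omega> i) - cF i))"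
    and FP: "integrable (boxes N D)
      (\<lambda>\<omega>. of_bool (FtInd N \<pi> \<omega> i) * (excess_PF i (\<omega> i) - (cF i + excess_P i (\<omega> i))))"
    and P: "integrable (boxes N D) (\<lambda>\<omega>. of_bool (PInd N \<pi> \<omega> i) * (excess_P i (\<omega> i) - cP i))"
    using i by (intro integrable_pred_times_box Bochner_Integration.integrable_diff
        Bochner_Integration.integrable_add integrable_box_functions; simp)+
  show ?thesis
    unfolding net_excess_def
    using Bochner_Integration.integral_add[OF Bochner_Integration.integrable_add[OF F FP] P]
      Bochner_Integration.integral_add[OF F FP]
    by (simp add: integral_F_term_eq_0[OF i] integral_P_term_eq_0[OF i] integral_FP_term_eq_0[OF i])
qed

lemma J_eq_JK_minus_expected_loss:
  "J N D cF cP \<pi> = JK N D \<sigma>F \<sigma>P \<sigma>Ft \<pi> - (\<integral>\<omega>. (\<Sum>i<N. loss \<omega> i) \<partial>boxes N D)"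
proof -
  have free: "integrable (boxes N D) (\<lambda>\<omega>. \<Sum>i<N. free_info \<omega> i)"
    and net: "integrable (boxes N D) (\<lambda>\<omega>. \<Sum>i<N. net_excess \<omega> i)"
    and loss: "integrable (boxes N D) (\<lambda>\<omega>. \<Sum>i<N. loss \<omega> i)"
    by (auto intro: integrable_free_info integrable_net_excess integrable_loss)
  have "J N D cF cP \<pi>
      = (\<integral>\<omega>. (\<Sum>i<N. free_info \<omega> i) + (\<Sum>i<N. net_excess \<omega> i) - (\<Sum>i<N. loss \<omega> i) \<partial>boxes N D)"
    unfolding J_def profit_def[symmetric] profit_decomposition by (simp add: sum.distrib sum_subtractf)
  also have "\<dots> = JK N D \<sigma>F \<sigma>P \<sigma>Ft \<pi> + (\<Sum>i<N. \<integral>\<omega>. net_excess \<omega> i \<partial>boxes N D)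
      - (\<integral>\<omega>. (\<Sum>i<N. loss \<omega> i) \<partial>boxes N D)"
    using free net loss integrable_net_excess
    by (simp add: JK_def free_info_def[symmetric] Bochner_Integration.integral_sum)
  finally show ?thesis by (simp add: integral_net_excess)
qed

lemma loss_terms_nonneg:
  "0 \<le> (of_bool (FInd N \<pi> \<omega> i) - of_bool (SInd N \<pi> \<omega> i)) * excess_F i (\<omega> i)"
  "0 \<le> (of_bool (FtInd N \<pi> \<omega> i) - of_bool (StInd N \<pi> \<omega> i)) * excess_PF i (\<omega> i)"
  "0 \<le> (of_bool (PInd N \<pi> \<omega> i) - of_bool (FtInd N \<pi> \<omega> i)) * excess_P i (\<omega> i)"
  using Sel_imp_FOpen[of i N \<pi> \<omega>]
  by (auto simp: FInd_def SInd_def FtInd_def StInd_def excess_F_def excess_PF_def excess_P_def)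

lemma loss_nonneg: "0 \<le> loss \<omega> i"
  unfolding loss_def using loss_terms_nonneg by (intro add_nonneg_nonneg)

lemma loss_eq_0_iff:
  "loss \<omega> i = 0 \<longleftrightarrow>
     (FInd N \<pi> \<omega> i \<and> fst (\<omega> i) > \<sigma>F i \<longrightarrow> Sel i \<in> set (acts N \<pi> \<omega>)) \<and>
     (PInd N \<pi> \<omega> i \<and> cF i < condE (D i) (\<sigma>P i) (snd (\<omega> i)) \<longrightarrow> FOpen i \<in> set (acts N \<pi> \<omega>)) \<and>
     (FtInd N \<pi> \<omega> i \<and> fst (\<omega> i) > min (\<sigma>P i) (\<sigma>Ft i (snd (\<omega> i))) \<longrightarrow> Sel i \<in> set (acts N \<pi> \<omega>))"
proof -
  have "loss \<omega> i = 0 \<longleftrightarrow>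
      (of_bool (FInd N \<pi> \<omega> i) - of_bool (SInd N \<pi> \<omega> i)) * excess_F i (\<omega> i) = 0 \<and>
      (of_bool (PInd N \<pi> \<omega> i) - of_bool (FtInd N \<pi> \<omega> i)) * excess_P i (\<omega> i) = 0 \<and>
      (of_bool (FtInd N \<pi> \<omega> i) - of_bool (StInd N \<pi> \<omega> i)) * excess_PF i (\<omega> i) = 0"
    unfolding loss_def using loss_terms_nonneg[of \<omega> i] by linarith
  then show ?thesis
    using Sel_imp_FOpen[of i N \<pi> \<omega>]
    by (auto simp: FInd_def SInd_def FtInd_def StInd_def excess_F_def excess_PF_def excess_P_def)
qed

lemma JK_eq_J_iff_AE_no_loss:
  "JK N D \<sigma>F \<sigma>P \<sigma>Ft \<pi> = J N D cF cP \<pi> \<longleftrightarrow> (AE \<omega> in boxes N D. \<forall>i<N. loss \<omega> i = 0)"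
proof -
  have "JK N D \<sigma>F \<sigma>P \<sigma>Ft \<pi> = J N D cF cP \<pi> \<longleftrightarrow> (\<integral>\<omega>. (\<Sum>i<N. loss \<omega> i) \<partial>boxes N D) = 0"
    using J_eq_JK_minus_expected_loss by linarith
  also have "\<dots> \<longleftrightarrow> (AE \<omega> in boxes N D. (\<Sum>i<N. loss \<omega> i) = 0)"
    by (rule integral_nonneg_eq_0_iff_AE)
      (auto intro: integrable_loss sum_nonneg loss_nonneg)
  also have "\<dots> \<longleftrightarrow> (AE \<omega> in boxes N D. \<forall>i<N. loss \<omega> i = 0)"
    by (rule AE_cong) (auto simp: sum_nonneg_eq_0_iff loss_nonneg)
  finally show ?thesis .
qed

lemma AE_condE_gt_cF_iff:
  "AE \<omega> in boxes N D. \<forall>i<N. cF i < condE (D i) (\<sigma>P i) (snd (\<omega> i)) \<longleftrightarrow> \<sigma>P i < \<sigma>Ft i (snd (\<omega> i))"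
proof -
  have "AE \<omega> in boxes N D. \<forall>i\<in>{..<N}.
      cF i < condE (D i) (\<sigma>P i) (snd (\<omega> i)) \<longleftrightarrow> \<sigma>P i < \<sigma>Ft i (snd (\<omega> i))"
  proof (rule AE_finite_allI)
    fix i assume i: "i \<in> {..<N}"
    interpret prize_type_law "D i" "\<Gamma> i" using box_law i by simp
    have "AE y in D i. cF i < condE (D i) (\<sigma>P i) (snd y) \<longleftrightarrow> \<sigma>P i < \<sigma>Ft i (snd y)"
      using AE_types AE_type_positive
      by eventually_elim (use i in \<open>simp add: condE_gt_iff sigmaFt cF_pos\<close>)
    from AE_PiM_component[of "{..<N}" D i, OF prob_box i this]
    show "AE \<omega> in boxes N D. cF i < condE (D i) (\<sigma>P i) (snd (\<omega> i)) \<longleftrightarrow> \<sigma>P i < \<sigma>Ft i (snd (\<omega> i))" .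
  qed simp
  then show ?thesis by eventually_elim auto
qed

lemma AE_no_loss_iff_conditions:
  "(AE \<omega> in boxes N D. \<forall>i<N. loss \<omega> i = 0) \<longleftrightarrow>
     cond1 N D \<sigma>F \<pi> \<and> cond2 N D \<sigma>P \<sigma>Ft \<pi> \<and> cond3 N D \<sigma>P \<sigma>Ft \<pi>"
  unfolding cond1_def cond2_def cond3_def AE_conj_iff[symmetric] loss_eq_0_iff
  by (rule eventually_cong[OF AE_condE_gt_cF_iff]) blast

end

theorem mainTheorem4:
  fixes N :: nat
    and D :: "nat \<Rightarrow> (real \<times> 't) measure"
    and \<Gamma> :: "nat \<Rightarrow> 't set"
    and cF cP \<sigma>F \<sigma>P :: "nat \<Rightarrow> real"
    and \<sigma>Ft :: "nat \<Rightarrow> 't \<Rightarrow> real"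
    and \<pi> :: "'t hist \<Rightarrow> action"
  assumes prob: "\<forall>i<N. prob_space (D i)"
    and sets: "\<forall>i<N. sets (D i) = sets (borel \<Otimes>\<^sub>M count_space UNIV)"
    and Gamma_fin: "\<forall>i<N. finite (\<Gamma> i)"
    and Gamma_ae: "\<forall>i<N. AE x in D i. snd x \<in> \<Gamma> i"
    and V_nonneg: "\<forall>i<N. AE x in D i. 0 \<le> fst x"
    and V_int: "\<forall>i<N. integrable (D i) fst"
    and costs: "\<forall>i<N. 0 < cF i \<and> 0 < cP i"
    and sigmaF: "\<forall>i<N. (\<integral>x. max 0 (fst x - \<sigma>F i) \<partial>D i) = cF i"
    and sigmaFt: "\<forall>i<N. \<forall>t\<in>\<Gamma> i. measure (D i) {x. snd x = t} > 0 \<longrightarrow> condE (D i) (\<sigma>Ft i t) t = cF i"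
    and sigmaP: "\<forall>i<N. (\<integral>x. max 0 (- cF i + condE (D i) (\<sigma>P i) (snd x)) \<partial>D i) = cP i"
    and meas: "policy_measurable N D \<pi>"
  shows "JK N D \<sigma>F \<sigma>P \<sigma>Ft \<pi> = J N D cF cP \<pi> \<longleftrightarrow>
           cond1 N D \<sigma>F \<pi> \<and> cond2 N D \<sigma>P \<sigma>Ft \<pi> \<and> cond3 N D \<sigma>P \<sigma>Ft \<pi>"
proof -
  have laws: "prize_type_law (D i) (\<Gamma> i)" if "i < N" for i
    using that prob sets Gamma_fin Gamma_ae V_int
    by (simp add: prize_type_law_def prize_type_law_axioms_def)
  interpret pandora_policy N D \<Gamma> cF cP \<sigma>F \<sigma>P \<sigma>Ft \<pi>
    by (rule pandora_policy.intro) (use laws costs sigmaF sigmaFt sigmaP meas in simp_all)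
  show ?thesis
    using JK_eq_J_iff_AE_no_loss AE_no_loss_iff_conditions by simp
qed

end
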